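(* Let $X$ be a real reflexive Banach space and let $h\in\mathcal{H}$ satisfy $h^{\ast}\circ i\le h$. Assume that $\mathrm{dom}(h)=\mathrm{dom}(h^{\ast}\circ i)$. Then $(\mathcal{A}^{\infty}h)^{\ast}\circ i=\mathcal{A}^{\infty}h$.
   Context: $X^{\ast}$ is the dual of $X$ with pairing $\langle\cdot,\cdot\rangle$. The dual of $X\times X^{\ast}$ is identified with $X^{\ast}\times X$ via $\langle (x,x^{\ast}),(y^{\ast},y)\rangle=\langle x,y^{\ast}\rangle+\langle y,x^{\ast}\rangle$; for $g:X\times X^{\ast}\to\mathbb{R}\cup\{+\infty\}$, $g^{\ast}(y^{\ast},y)=\sup_{(x,x^{\ast})}\{\langle x,y^{\ast}\rangle+\langle y,x^{\ast}\rangle-g(x,x^{\ast})\}$, and $i(x,x^{\ast})=(x^{\ast},x)$. For a maximally monotone $T:X\rightrightarrows X^{\ast}$, $\mathcal{H}(T)$ is the family of lower semicontinuous convex functions $h:X\times X^{\ast}\to\mathbb{R}\cup\{+\infty\}$ with $h(x,x^{\ast})\ge\langle x,x^{\ast}\rangle$ everywhere and $h(x,x^{\ast})=\langle x,x^{\ast}\rangle$ whenever $x^{\ast}\in T(x)$; $\mathcal{H}$ is the union of $\mathcal{H}(T)$ over all maximally monotone $T$. $\mathcal{A}h:=\tfrac12(h+h^{\ast}\circ i)$, $\mathcal{A}^n$ is its $n$-th iterate, and $\mathcal{A}^{\infty}h$ is the pointwise limit (equivalently infimum) of the pointwise non-increasing sequence $\{\mathcal{A}^n h\}_{n\ge1}$.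 $\mathrm{dom}(g)=\{z:g(z)<+\infty\}$. *)

theory Defs
  imports "HOL-Analysis.Analysis"
begin

text \<open>X is modelled by a type 'a of class banach (real Banach space);
  its dual X* is the type ('a \<Rightarrow>L real) of bounded linear functionals,
  and the pairing <x, x*> is blinfun_apply x* x.\<close>

definition reflexive_space :: "'a::banach itself \<Rightarrow> bool" where
  "reflexive_space _ \<longleftrightarrow>
     (\<forall>\<phi> :: ('a \<Rightarrow>\<^sub>L real) \<Rightarrow>\<^sub>L real. \<exists>x::'a. \<forall>f. blinfun_apply \<phi> f = blinfun_apply f x)"

definition pairing :: "'a::real_normed_vector \<times> ('a \<Rightarrow>\<^sub>L real) \<Rightarrow> ereal" where
  "pairing z = ereal (blinfun_apply (snd z) (fst z))"

definition monotone_op :: "('a::real_normed_vector \<Rightarrow> ('a \<Rightarrow>\<^sub>L real) set) \<Rightarrow> bool" where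
  "monotone_op T \<longleftrightarrow> (\<forall>x y xs ys. xs \<in> T x \<longrightarrow> ys \<in> T y \<longrightarrow>
       blinfun_apply (xs - ys) (x - y) \<ge> 0)"

definition maximally_monotone :: "('a::real_normed_vector \<Rightarrow> ('a \<Rightarrow>\<^sub>L real) set) \<Rightarrow> bool" where
  "maximally_monotone T \<longleftrightarrow> monotone_op T \<and>
     (\<forall>S. monotone_op S \<and> (\<forall>x. T x \<subseteq> S x) \<longrightarrow> S = T)"

definition lsc_ereal :: "('b::topological_space \<Rightarrow> ereal) \<Rightarrow> bool" where
  "lsc_ereal g \<longleftrightarrow> (\<forall>c::real. closed {z. g z \<le> ereal c})"

definition convex_ereal :: "('b::real_vector \<Rightarrow> ereal) \<Rightarrow> bool" where
  "convex_ereal g \<longleftrightarrow> (\<forall>z w (t::real). 0 \<le> t \<and> t \<le> 1 \<longrightarrow>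
       g ((1 - t) *\<^sub>R z + t *\<^sub>R w) \<le> ereal (1 - t) * g z + ereal t * g w)"

definition fitz_family :: "('a::real_normed_vector \<Rightarrow> ('a \<Rightarrow>\<^sub>L real) set)
     \<Rightarrow> ('a \<times> ('a \<Rightarrow>\<^sub>L real) \<Rightarrow> ereal) set" where
  "fitz_family T = {h. lsc_ereal h \<and> convex_ereal h \<and> (\<forall>z. h z \<ge> pairing z) \<and>
       (\<forall>x xs. xs \<in> T x \<longrightarrow> h (x, xs) = pairing (x, xs))}"

definition fitz_all :: "('a::real_normed_vector \<times> ('a \<Rightarrow>\<^sub>L real) \<Rightarrow> ereal) set" where
  "fitz_all = {h. \<exists>T. maximally_monotone T \<and> h \<in> fitz_family T}"

definition fconj :: "('a::real_normed_vector \<times> ('a \<Rightarrow>\<^sub>L real) \<Rightarrow> ereal)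
     \<Rightarrow> ('a \<Rightarrow>\<^sub>L real) \<times> 'a \<Rightarrow> ereal" where
  "fconj g = (\<lambda>(ys, y). SUP z \<in> UNIV.
       ereal (blinfun_apply ys (fst z) + blinfun_apply (snd z) y) - g z)"

definition iswap :: "'a \<times> 'b \<Rightarrow> 'b \<times> 'a" where
  "iswap z = (snd z, fst z)"

definition Aop :: "('a::real_normed_vector \<times> ('a \<Rightarrow>\<^sub>L real) \<Rightarrow> ereal)
     \<Rightarrow> 'a \<times> ('a \<Rightarrow>\<^sub>L real) \<Rightarrow> ereal" where
  "Aop h = (\<lambda>z. (h z + (fconj h \<circ> iswap) z) / 2)"

definition Ainf :: "('a::real_normed_vector \<times> ('a \<Rightarrow>\<^sub>L real) \<Rightarrow> ereal)
     \<Rightarrow> 'a \<times> ('a \<Rightarrow>\<^sub>L real) \<Rightarrow> ereal" where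
  "Ainf h = (\<lambda>z. INF n \<in> {1..}. (Aop ^^ n) h z)"

definition edom :: "('b \<Rightarrow> ereal) \<Rightarrow> 'b set" where
  "edom g = {z. g z < \<infinity>}"

end

theory Submission
  imports Defs
begin

text \<open>Each step of \<open>\<A>\<close> preserves \<open>f\<^sup>* \<circ> i \<le> f\<close>, decreases \<open>f\<close> and, since then
  \<open>f\<^sup>* \<circ> i \<le> (\<A>f)\<^sup>* \<circ> i\<close>, at least halves the gap \<open>f - f\<^sup>* \<circ> i\<close>.
  The limit \<open>\<A>\<^sup>\<infinity>h\<close> of the decreasing sequence still dominates its own conjugate, and its gap
  vanishes wherever the initial gap is finite; by the domain hypothesis this is everywhere
  except where \<open>h\<^sup>* \<circ> i = \<infinity>\<close>, and there \<open>(\<A>\<^sup>\<infinity>h)\<^sup>* \<circ> i \<ge> h\<^sup>* \<circ> i = \<infinity>\<close>.\<close>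

definition coupling :: "'a::real_normed_vector \<times> ('a \<Rightarrow>\<^sub>L real) \<Rightarrow> 'a \<times> ('a \<Rightarrow>\<^sub>L real) \<Rightarrow> real" where
  "coupling z w = blinfun_apply (snd z) (fst w) + blinfun_apply (snd w) (fst z)"

lemma coupling_commute: "coupling z w = coupling w z"
  by (simp add: coupling_def)

lemma fconj_iswap_eq: "fconj f (iswap z) = (SUP w. ereal (coupling z w) - f w)"
  by (simp add: fconj_def iswap_def coupling_def case_prod_beta)

lemma fenchel_young_iswap: "ereal (coupling z w) - f w \<le> fconj f (iswap z)"
  unfolding fconj_iswap_eq by (rule SUP_upper) simp

lemma fconj_iswap_least: "(\<And>w. ereal (coupling z w) - f w \<le> c) \<Longrightarrow> fconj f (iswap z) \<le> c"
  unfolding fconj_iswap_eq by (rule SUP_least)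

lemma fconj_antimono: "(\<And>w. f w \<le> g w) \<Longrightarrow> fconj g p \<le> fconj f p"
  unfolding fconj_def case_prod_beta
  by (rule SUP_mono) (blast intro: ereal_minus_mono order_refl)

lemma fconj_iswap_gt_MInf: "f w < \<infinity> \<Longrightarrow> -\<infinity> < fconj f (iswap z)"
  by (rule less_le_trans[OF _ fenchel_young_iswap[of z w]]) (cases "f w"; simp)

definition conj_dominated :: "('a::real_normed_vector \<times> ('a \<Rightarrow>\<^sub>L real) \<Rightarrow> ereal) \<Rightarrow> bool" where
  "conj_dominated f \<longleftrightarrow> (\<forall>z. -\<infinity> < fconj f (iswap z) \<and> fconj f (iswap z) \<le> f z)"

lemma conj_dominatedD:
  assumes "conj_dominated f"
  shows "-\<infinity> < fconj f (iswap z)" "fconj f (iswap z) \<le> f z" "-\<infinity> < f z"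
  using assms less_le_trans unfolding conj_dominated_def by blast+

lemma Aop_eq: "Aop f z = (f z + fconj f (iswap z)) / 2"
  by (simp add: Aop_def)

lemma Aop_le:
  assumes "conj_dominated f"
  shows "Aop f z \<le> f z"
  using conj_dominatedD[OF assms, of z] unfolding Aop_eq
  by (cases "f z"; cases "fconj f (iswap z)") auto

lemma ereal_half_sums_coupling:
  fixes a b c d :: ereal
  assumes "-\<infinity> < b" "b \<le> a" "-\<infinity> < d" "d \<le> c"
    and "ereal t - c \<le> b" "ereal t - a \<le> d"
  shows "ereal t - (c + d) / 2 \<le> (a + b) / 2"
  using assms by (cases a; cases b; cases c; cases d) (simp_all add: field_simps)

lemma fconj_Aop_le_Aop:
  assumes f: "conj_dominated f"
  shows "fconj (Aop f) (iswap z) \<le> Aop f z"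
proof (rule fconj_iswap_least)
  fix w
  show "ereal (coupling z w) - Aop f w \<le> Aop f z"
    unfolding Aop_eq
  proof (rule ereal_half_sums_coupling)
    show "ereal (coupling z w) - f w \<le> fconj f (iswap z)"
      by (rule fenchel_young_iswap)
    show "ereal (coupling z w) - f z \<le> fconj f (iswap w)"
      using fenchel_young_iswap[of w z f] by (simp add: coupling_commute)
  qed (use conj_dominatedD[OF f] in auto)
qed

lemma fconj_le_fconj_Aop:
  assumes "conj_dominated f"
  shows "fconj f p \<le> fconj (Aop f) p"
  by (rule fconj_antimono) (rule Aop_le[OF assms])

lemma conj_dominated_Aop:
  assumes f: "conj_dominated f"
  shows "conj_dominated (Aop f)"
  unfolding conj_dominated_def
proof
  fix z
  have "-\<infinity> < fconj f (iswap z)"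
    by (rule conj_dominatedD(1)[OF f])
  also have "\<dots> \<le> fconj (Aop f) (iswap z)"
    by (rule fconj_le_fconj_Aop[OF f])
  finally show "-\<infinity> < fconj (Aop f) (iswap z) \<and> fconj (Aop f) (iswap z) \<le> Aop f z"
    using fconj_Aop_le_Aop[OF f] by blast
qed

text \<open>The gap of \<open>\<A>f\<close> is at most half the gap of \<open>f\<close>, written without division
  so that the infinite cases are harmless.\<close>

lemma ereal_half_sum_gap:
  fixes a b c :: ereal
  assumes "-\<infinity> < b" "b \<le> a" "b \<le> c" "c \<le> (a + b) / 2"
  shows "2 * ((a + b) / 2 - c) \<le> a - b"
  using assms by (cases a; cases b; cases c) (simp_all add: field_simps)

lemma Aop_gap:
  assumes f: "conj_dominated f"
  shows "2 * (Aop f z - fconj (Aop f) (iswap z)) \<le> f z - fconj f (iswap z)"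
  unfolding Aop_eq[of f z]
proof (rule ereal_half_sum_gap)
  show "-\<infinity> < fconj f (iswap z)" "fconj f (iswap z) \<le> f z"
    using conj_dominatedD[OF f] by blast+
  show "fconj f (iswap z) \<le> fconj (Aop f) (iswap z)"
    by (rule fconj_le_fconj_Aop[OF f])
  show "fconj (Aop f) (iswap z) \<le> (f z + fconj f (iswap z)) / 2"
    using fconj_Aop_le_Aop[OF f, of z] by (simp only: Aop_eq)
qed

lemma conj_dominated_Aop_iter: "conj_dominated f \<Longrightarrow> conj_dominated ((Aop ^^ n) f)"
  by (induction n) (simp_all add: conj_dominated_Aop)

lemma Aop_iter_antimono:
  assumes "conj_dominated f" "m \<le> n"
  shows "(Aop ^^ n) f z \<le> (Aop ^^ m) f z"
  by (rule lift_Suc_antimono_le[of "\<lambda>n. (Aop ^^ n) f z", OF _ assms(2)])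
     (simp add: Aop_le conj_dominated_Aop_iter[OF assms(1)])

lemma Aop_iter_gap:
  assumes f: "conj_dominated f"
  shows "2 ^ n * ((Aop ^^ n) f z - fconj ((Aop ^^ n) f) (iswap z)) \<le> f z - fconj f (iswap z)"
proof (induction n)
  case (Suc n)
  let ?g = "(Aop ^^ n) f"
  have "2 ^ Suc n * ((Aop ^^ Suc n) f z - fconj ((Aop ^^ Suc n) f) (iswap z))
      = 2 ^ n * (2 * (Aop ?g z - fconj (Aop ?g) (iswap z)))"
    by (simp only: funpow.simps(2) o_apply power_Suc2 mult.assoc)
  also have "\<dots> \<le> 2 ^ n * (?g z - fconj ?g (iswap z))"
    by (rule ereal_mult_left_mono[OF Aop_gap[OF conj_dominated_Aop_iter[OF f]]]) simp
  also have "\<dots> \<le> f z - fconj f (iswap z)"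
    by (rule Suc.IH)
  finally show ?case .
qed simp

lemma ereal_le_0_if_pow2_bounded:
  fixes e :: ereal
  assumes bound: "\<And>n::nat. 2 ^ n * e \<le> ereal c"
  shows "e \<le> 0"
proof (rule ccontr)
  assume "\<not> e \<le> 0"
  then obtain d where "0 < d" "ereal d \<le> e"
    by (metis ereal_dense2 ereal_less(2) not_le order_less_imp_le)
  obtain n :: nat where "c / d < 2 ^ n"
    using real_arch_pow[of 2 "c / d"] by auto
  with \<open>0 < d\<close> have "ereal c < 2 ^ n * ereal d"
    by (simp add: field_simps)
  also have "\<dots> \<le> 2 ^ n * e"
    using \<open>ereal d \<le> e\<close> by (rule ereal_mult_left_mono) simp
  finally show False
    using bound[of n] by simp
qed

text \<open>Directedness lets a single member of the family witness both points of the
  Fenchel--Young inequality.\<close>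

lemma fconj_INF_le_INF:
  assumes dom: "\<And>i. i \<in> I \<Longrightarrow> conj_dominated (H i)"
    and directed: "\<And>i j. i \<in> I \<Longrightarrow> j \<in> I \<Longrightarrow> \<exists>k\<in>I. \<forall>z. H k z \<le> H i z \<and> H k z \<le> H j z"
  shows "fconj (\<lambda>z. INF i\<in>I. H i z) (iswap z) \<le> (INF i\<in>I. H i z)"
proof (rule fconj_iswap_least, rule INF_greatest)
  fix w i assume i: "i \<in> I"
  show "ereal (coupling z w) - (INF j\<in>I. H j w) \<le> H i z"
  proof (cases "H i z")
    case (real r)
    have "ereal (coupling z w - r) \<le> H j w" if j: "j \<in> I" for j
    proof -
      obtain k where k: "k \<in> I" "\<And>z. H k z \<le> H i z" "\<And>z. H k z \<le> H j z"
        using directed[OF i j] by blast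
      have "ereal (coupling z w - r) = ereal (coupling w z) - H i z"
        by (simp add: real coupling_commute)
      also have "\<dots> \<le> ereal (coupling w z) - H k z"
        using k(2) by (rule ereal_minus_mono[OF order_refl])
      also have "\<dots> \<le> fconj (H k) (iswap w)"
        by (rule fenchel_young_iswap)
      also have "\<dots> \<le> H k w"
        using conj_dominatedD(2)[OF dom[OF k(1)]] .
      also have "\<dots> \<le> H j w"
        by (rule k(3))
      finally show ?thesis .
    qed
    then have "ereal (coupling z w - r) \<le> (INF j\<in>I. H j w)"
      by (rule INF_greatest)
    then show ?thesis
      using real by (cases "INF j\<in>I. H j w") auto
  qed (use conj_dominatedD(3)[OF dom[OF i]] in auto)
qed

lemma Ainf_le_Aop_iter:
  assumes "conj_dominated f"
  shows "Ainf f z \<le> (Aop ^^ n) f z"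
proof -
  have "Ainf f z \<le> (Aop ^^ max 1 n) f z"
    unfolding Ainf_def by (rule INF_lower) simp
  also have "\<dots> \<le> (Aop ^^ n) f z"
    using assms by (rule Aop_iter_antimono) simp
  finally show ?thesis .
qed

lemma fconj_Ainf_le_Ainf:
  assumes "conj_dominated f"
  shows "fconj (Ainf f) (iswap z) \<le> Ainf f z"
  unfolding Ainf_def
proof (rule fconj_INF_le_INF)
  fix m n :: nat assume "m \<in> {1..}" "n \<in> {1..}"
  then show "\<exists>k\<in>{1..}. \<forall>z. (Aop ^^ k) f z \<le> (Aop ^^ m) f z \<and> (Aop ^^ k) f z \<le> (Aop ^^ n) f z"
    using Aop_iter_antimono[OF assms] by (intro bexI[of _ "max m n"]) auto
qed (rule conj_dominated_Aop_iter[OF assms])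

lemma Ainf_le_fconj_Ainf:
  assumes f: "conj_dominated f"
    and dom: "fconj f (iswap z) < \<infinity> \<Longrightarrow> f z < \<infinity>"
  shows "Ainf f z \<le> fconj (Ainf f) (iswap z)"
proof -
  have fconj_le: "fconj f (iswap z) \<le> fconj (Ainf f) (iswap z)"
    using Ainf_le_Aop_iter[OF f, of _ 0] by (intro fconj_antimono) simp
  show ?thesis
  proof (cases "fconj f (iswap z) < \<infinity>")
    case False
    then show ?thesis
      using fconj_le by simp
  next
    case True
    then obtain c where c: "f z - fconj f (iswap z) = ereal c"
      using dom conj_dominatedD[OF f, of z]
      by (cases "f z"; cases "fconj f (iswap z)") auto
    have "2 ^ n * (Ainf f z - fconj (Ainf f) (iswap z)) \<le> ereal c" for n
    proof -
      let ?g = "(Aop ^^ n) f"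
      have "Ainf f z - fconj (Ainf f) (iswap z) \<le> ?g z - fconj ?g (iswap z)"
        using Ainf_le_Aop_iter[OF f] by (intro ereal_minus_mono fconj_antimono)
      then have "2 ^ n * (Ainf f z - fconj (Ainf f) (iswap z)) \<le> 2 ^ n * (?g z - fconj ?g (iswap z))"
        by (rule ereal_mult_left_mono) simp
      also have "\<dots> \<le> ereal c"
        using Aop_iter_gap[OF f, of n z] by (simp only: c)
      finally show ?thesis .
    qed
    then have "Ainf f z - fconj (Ainf f) (iswap z) \<le> 0"
      by (rule ereal_le_0_if_pow2_bounded)
    moreover have "-\<infinity> < fconj (Ainf f) (iswap z)"
      using conj_dominatedD(1)[OF f, of z] fconj_le by (rule less_le_trans)
    ultimately show ?thesis
      by (cases "Ainf f z"; cases "fconj (Ainf f) (iswap z)") auto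
  qed
qed

lemma fconj_Ainf_eq_Ainf:
  assumes "conj_dominated f"
    and "\<And>z. fconj f (iswap z) < \<infinity> \<Longrightarrow> f z < \<infinity>"
  shows "fconj (Ainf f) \<circ> iswap = Ainf f"
proof
  fix z
  show "(fconj (Ainf f) \<circ> iswap) z = Ainf f z"
    unfolding o_apply
    by (rule antisym[OF fconj_Ainf_le_Ainf[OF assms(1)] Ainf_le_fconj_Ainf[OF assms]])
qed

theorem corollary2p1:
  fixes h :: "'a::banach \<times> ('a \<Rightarrow>\<^sub>L real) \<Rightarrow> ereal"
  assumes "reflexive_space TYPE('a)"
    and "h \<in> fitz_all"
    and "\<forall>z. (fconj h \<circ> iswap) z \<le> h z"
    and "edom h = edom (fconj h \<circ> iswap)"
  shows "fconj (Ainf h) \<circ> iswap = Ainf h"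
proof (rule fconj_Ainf_eq_Ainf)
  have dom_eq: "h z < \<infinity> \<longleftrightarrow> fconj h (iswap z) < \<infinity>" for z
    using assms(4) unfolding edom_def by (metis (no_types) mem_Collect_eq o_apply)
  obtain w where "h w < \<infinity>"
  proof (cases "\<exists>w. h w < \<infinity>")
    case False
    then have h_inf: "h w = \<infinity>" for w
      by (cases w) (simp add: not_less)
    then have "fconj h (iswap z) \<le> -\<infinity>" for z
      by (intro fconj_iswap_least) simp
    then show ?thesis
      using dom_eq h_inf by (metis MInfty_neq_PInfty(1) ereal_infty_less(1) ereal_infty_less_eq(2))
  qed blast
  then show "conj_dominated h"
    using assms(3) fconj_iswap_gt_MInf[of h w] unfolding conj_dominated_def by simp
  show "fconj h (iswap z) < \<infinity> \<Longrightarrow> h z < \<infinity>" for z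
    using dom_eq by blast
qed

end
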